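(* Let $k\ge1$ and $r=\sqrt[k]{p}$. On recursion level $t$ ($1\le t\le k$) of multi-level MS, string-based regular sampling with sampling factor $v>0$ yields buckets of size $|B^j|\le\bigl(1+\frac{r}{v}\bigr)^t\frac{n}{r^t}$.
   Context: $p$ PEs hold in total $n$ strings. Multi-level MS (with $p=r^k$): each PE sorts its local strings; then on each level $t=1,\dots,k$ the PEs form $r^{t-1}$ groups of $p'=r^{k+1-t}$ consecutive PEs, each group independently sorting the concatenation $S'$ of its PEs' locally sorted arrays $S_i$ (the strings of a group on level $t>1$ are exactly one bucket of the previous level): $r-1$ splitters $f_1<\dots<f_{r-1}$ are chosen, bucket $B^j=\bigcup_i\{s\in S_i: f_j<s\le f_{j+1}\}$ ($f_0=-\infty,f_r=\infty$) is sent to the $j$-th subgroup of $p'/r$ PEs, and received sequences are merged. String-based regular sampling with sampling factor $v$: let $\omega=|S'|/(p'(v+1))$, where it is assumed that $|S'|$ is divisible by $p'(v+1)$; PE $i$ draws $\lceil|S_i|/\omega\rceil-1$ samples spaced as evenly as possible from its sorted local array; if the total number of samples is smaller than $p'(v+1)$, the first $p'(v+1)-|V|$ PEs draw one additional sample each. The samples $V$ are sorted globally and $f_j=V[j|V|/r-1]$ for $0<j<r$. *)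

theory Defs
  imports Complex_Main "HOL-Library.Multiset"
begin

text \<open>Strings are elements of an arbitrary linear
order (the lexicographic order on strings is an instance).  PEs are numbered
0..p-1, levels t = 1..k.

  D t i : the locally sorted array of PE i at the start of level t.
  Q t i : the (0-based) positions in D t i of the samples PE i draws on level t.\<close>

definition gsz :: "nat \<Rightarrow> nat \<Rightarrow> nat \<Rightarrow> nat" where
  "gsz r k t = r ^ (k + 1 - t)"

definition gpes :: "nat \<Rightarrow> nat \<Rightarrow> nat \<Rightarrow> nat \<Rightarrow> nat list" where
  "gpes r k t g = [g * gsz r k t ..< Suc g * gsz r k t]"

definition gtotal :: "nat \<Rightarrow> nat \<Rightarrow> (nat \<Rightarrow> nat \<Rightarrow> 'a list) \<Rightarrow> nat \<Rightarrow> nat \<Rightarrow> nat" where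
  "gtotal r k D t g = (\<Sum>i\<leftarrow>gpes r k t g. length (D t i))"

definition omega :: "nat \<Rightarrow> nat \<Rightarrow> nat \<Rightarrow> (nat \<Rightarrow> nat \<Rightarrow> 'a list) \<Rightarrow> nat \<Rightarrow> nat \<Rightarrow> real" where
  "omega r k v D t g = real (gtotal r k D t g) / real (gsz r k t * (v + 1))"

definition base_samples :: "nat \<Rightarrow> nat \<Rightarrow> nat \<Rightarrow> (nat \<Rightarrow> nat \<Rightarrow> 'a list) \<Rightarrow> nat \<Rightarrow> nat \<Rightarrow> nat \<Rightarrow> nat" where
  "base_samples r k v D t g i =
     nat \<lceil>real (length (D t i)) / omega r k v D t g\<rceil> - 1"

text \<open>Number of samples PE i of group g draws on level t, including the one
additional sample drawn by the first p'(v+1) - |V| PEs of the group.\<close>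
definition num_samples :: "nat \<Rightarrow> nat \<Rightarrow> nat \<Rightarrow> (nat \<Rightarrow> nat \<Rightarrow> 'a list) \<Rightarrow> nat \<Rightarrow> nat \<Rightarrow> nat \<Rightarrow> nat" where
  "num_samples r k v D t g i =
     base_samples r k v D t g i +
     (if i - g * gsz r k t < gsz r k t * (v + 1) - (\<Sum>i'\<leftarrow>gpes r k t g. base_samples r k v D t g i')
      then 1 else 0)"

text \<open>Sample positions qs in an array of length m, spaced as evenly as possible:
with virtual boundary positions -1 and m, the positions are strictly increasing
and all distances between consecutive positions differ by at most one.\<close>
definition evenly_spaced :: "nat \<Rightarrow> nat list \<Rightarrow> bool" where
  "evenly_spaced m qs =
     (let bs = (-1) # map int qs @ [int m];
          ds = map (\<lambda>l. bs ! Suc l - bs ! l) [0..<Suc (length qs)]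
      in sorted_wrt (<) bs \<and> (\<forall>a\<in>set ds. \<forall>b\<in>set ds. \<bar>a - b\<bar> \<le> 1))"

definition sample_seq :: "nat \<Rightarrow> nat \<Rightarrow> (nat \<Rightarrow> nat \<Rightarrow> 'a::linorder list) \<Rightarrow> (nat \<Rightarrow> nat \<Rightarrow> nat list) \<Rightarrow> nat \<Rightarrow> nat \<Rightarrow> 'a list" where
  "sample_seq r k D Q t g = sort (concat (map (\<lambda>i. map (\<lambda>q. D t i ! q) (Q t i)) (gpes r k t g)))"

text \<open>Splitter f_j = V[j|V|/r - 1] (meaningful for 0 < j < r).\<close>
definition splitter :: "nat \<Rightarrow> nat \<Rightarrow> (nat \<Rightarrow> nat \<Rightarrow> 'a::linorder list) \<Rightarrow> (nat \<Rightarrow> nat \<Rightarrow> nat list) \<Rightarrow> nat \<Rightarrow> nat \<Rightarrow> nat \<Rightarrow> 'a" where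
  "splitter r k D Q t g j = (let V = sample_seq r k D Q t g in V ! (j * length V div r - 1))"

text \<open>f_j < s <= f_(j+1), with f_0 = -infinity and f_r = infinity.\<close>
definition in_bucket :: "nat \<Rightarrow> nat \<Rightarrow> (nat \<Rightarrow> nat \<Rightarrow> 'a::linorder list) \<Rightarrow> (nat \<Rightarrow> nat \<Rightarrow> nat list) \<Rightarrow> nat \<Rightarrow> nat \<Rightarrow> nat \<Rightarrow> 'a \<Rightarrow> bool" where
  "in_bucket r k D Q t g j s =
     ((j = 0 \<or> splitter r k D Q t g j < s) \<and> (Suc j = r \<or> s \<le> splitter r k D Q t g (Suc j)))"

definition bucket :: "nat \<Rightarrow> nat \<Rightarrow> (nat \<Rightarrow> nat \<Rightarrow> 'a::linorder list) \<Rightarrow> (nat \<Rightarrow> nat \<Rightarrow> nat list) \<Rightarrow> nat \<Rightarrow> nat \<Rightarrow> nat \<Rightarrow> 'a list" where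
  "bucket r k D Q t g j = concat (map (\<lambda>i. filter (in_bucket r k D Q t g j) (D t i)) (gpes r k t g))"

definition subgroup_pes :: "nat \<Rightarrow> nat \<Rightarrow> nat \<Rightarrow> nat \<Rightarrow> nat \<Rightarrow> nat list" where
  "subgroup_pes r k t g j = [g * gsz r k t + j * gsz r k (Suc t) ..< g * gsz r k t + Suc j * gsz r k (Suc t)]"

text \<open>How a bucket is distributed among the PEs of its subgroup is not specified,
so any distribution is allowed; received sequences are merged (sorted).\<close>
definition ms_execution :: "nat \<Rightarrow> nat \<Rightarrow> nat \<Rightarrow> (nat \<Rightarrow> 'a::linorder list) \<Rightarrow> (nat \<Rightarrow> nat \<Rightarrow> 'a list) \<Rightarrow> (nat \<Rightarrow> nat \<Rightarrow> nat list) \<Rightarrow> bool" where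
  "ms_execution r k v inp D Q \<longleftrightarrow>
     (\<forall>i < r ^ k. D 1 i = sort (inp i)) \<and>
     (\<forall>t\<in>{1..<k}. \<forall>g < r ^ (t - 1). \<forall>j < r.
        (\<Sum>i\<leftarrow>subgroup_pes r k t g j. mset (D (Suc t) i)) = mset (bucket r k D Q t g j) \<and>
        (\<forall>i\<in>set (subgroup_pes r k t g j). sorted (D (Suc t) i))) \<and>
     (\<forall>t\<in>{1..k}. \<forall>g < r ^ (t - 1). \<forall>i\<in>set (gpes r k t g).
        length (Q t i) = num_samples r k v D t g i \<and> evenly_spaced (length (D t i)) (Q t i))"

end

(*
  On PE i the samples are evenly spaced and |S_i| <= omega (q_i + 1), where q_i is the number of
  its samples; so c + 1 consecutive gaps between samples (counting the virtual positions -1 and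
  |S_i| as boundaries) contain at most (c + 1) omega strings.  The strings of B^j on PE i lie
  strictly between its last sample <= f_j and its first sample > f_(j+1), hence there are at most
  omega (c_i + 1) of them, where c_i counts its samples in (f_j, f_(j+1)].  The splitters are |V|/r
  apart in the sorted sample sequence V and |V| = p'(v + 1), so summing over the p' PEs gives
  |B^j| <= (|V|/r + p') omega = |S'|/r + |S'|/(v + 1) <= (1 + r/v) |S'|/r.  A group on level
  t + 1 holds exactly one bucket of level t, and induction over the levels, starting from
  |S'| = n on level 1, yields the claim.
*)

theory Submission
  imports Defs
begin

section \<open>Evenly spaced samples\<close>

text \<open>Either every term is at most \<open>w\<close>, or every term is at least \<open>w\<close> and the terms outside
  the window already take all but the window's share of the total.\<close>

lemma sum_le_of_nearly_constant:
  fixes d :: "nat \<Rightarrow> int" and w :: int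
  assumes close: "\<And>l1 l2. l1 \<le> c \<Longrightarrow> l2 \<le> c \<Longrightarrow> \<bar>d l1 - d l2\<bar> \<le> 1"
    and total: "(\<Sum>l=0..c. d l) \<le> w * (int c + 1) + 1"
    and "a \<le> b" "b \<le> c"
  shows "(\<Sum>l=a..b. d l) \<le> (int b + 1 - int a) * w + 1"
proof (cases "\<exists>l0\<le>c. d l0 < w")
  case True
  then obtain l0 where "l0 \<le> c" "d l0 < w" by blast
  then have "d l \<le> w" if "l \<in> {a..b}" for l
    using close[of l l0] that \<open>b \<le> c\<close> by auto
  then have "(\<Sum>l=a..b. d l) \<le> (\<Sum>l=a..b. w)" by (rule sum_mono)
  then show ?thesis using \<open>a \<le> b\<close> by (simp add: algebra_simps)
next
  case False
  have sub: "{a..b} \<subseteq> {0..c}" using \<open>b \<le> c\<close> by auto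
  have "(\<Sum>l\<in>{0..c} - {a..b}. w) \<le> (\<Sum>l\<in>{0..c} - {a..b}. d l)"
    using False by (intro sum_mono) (auto simp: not_less)
  moreover have "card ({0..c} - {a..b}) = c + 1 - (b + 1 - a)"
    using sub \<open>a \<le> b\<close> by (simp add: card_Diff_subset)
  moreover have "(\<Sum>l=0..c. d l) = (\<Sum>l\<in>{0..c} - {a..b}. d l) + (\<Sum>l=a..b. d l)"
    using sum.subset_diff[OF sub] by simp
  ultimately show ?thesis
    using total \<open>a \<le> b\<close> \<open>b \<le> c\<close> by (simp add: of_nat_diff algebra_simps)
qed

lemma nth_in_downset_iff_less_length_filter:
  assumes "sorted ys" and down: "\<And>x y. P y \<Longrightarrow> x \<le> y \<Longrightarrow> P x" and "l < length ys"
  shows "P (ys ! l) \<longleftrightarrow> l < length (filter P ys)"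
  using assms(1,3)
proof (induction ys arbitrary: l)
  case Nil
  then show ?case by simp
next
  case (Cons y ys)
  show ?case
  proof (cases "P y")
    case True
    then show ?thesis using Cons by (cases l) auto
  next
    case False
    have "\<not> P z" if "z \<in> set (y # ys)" for z
      using that Cons.prems(1) False down by auto
    then show ?thesis
      using Cons.prems(2) nth_mem[of l "y # ys"] by (simp add: filter_empty_conv del: nth_mem)
  qed
qed

definition sample_bounds :: "nat \<Rightarrow> nat list \<Rightarrow> int list" where
  "sample_bounds m qs = (-1) # map int qs @ [int m]"

lemma sample_bounds_nth:
  "sample_bounds m qs ! 0 = -1"
  "l < length qs \<Longrightarrow> sample_bounds m qs ! Suc l = int (qs ! l)"
  "sample_bounds m qs ! Suc (length qs) = int m"
  by (simp_all add: sample_bounds_def nth_append)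

lemma evenly_spaced_sample_bounds:
  assumes "evenly_spaced m qs"
  shows "sorted_wrt (<) (sample_bounds m qs)"
    and "l1 \<le> length qs \<Longrightarrow> l2 \<le> length qs \<Longrightarrow>
      \<bar>(sample_bounds m qs ! Suc l1 - sample_bounds m qs ! l1)
        - (sample_bounds m qs ! Suc l2 - sample_bounds m qs ! l2)\<bar> \<le> 1"
  using assms unfolding evenly_spaced_def sample_bounds_def[symmetric] Let_def
  by (auto simp del: upt_Suc)

lemma sample_bounds_window_le:
  fixes w :: nat
  assumes es: "evenly_spaced m qs" and cap: "m \<le> w * (length qs + 1)"
    and "a \<le> b" "b \<le> length qs"
  shows "sample_bounds m qs ! Suc b - sample_bounds m qs ! a \<le> (int b + 1 - int a) * int w + 1"
proof -
  define bs where "bs = sample_bounds m qs"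
  define d where "d l = bs ! Suc l - bs ! l" for l
  have "(\<Sum>l=0..length qs. d l) = int m + 1"
    using sum_Suc_diff[of 0 "length qs" "\<lambda>l. bs ! l"] by (simp add: d_def bs_def sample_bounds_nth)
  also have "\<dots> \<le> int w * (int (length qs) + 1) + 1"
    using cap by (simp add: algebra_simps flip: of_nat_mult of_nat_Suc)
  finally have "(\<Sum>l=a..b. d l) \<le> (int b + 1 - int a) * int w + 1"
    using evenly_spaced_sample_bounds(2)[OF es] assms(3,4)
    by (intro sum_le_of_nearly_constant) (auto simp: d_def bs_def)
  then show ?thesis
    using sum_Suc_diff[of a b "\<lambda>l. bs ! l"] \<open>a \<le> b\<close> by (simp add: d_def bs_def)
qed

lemma evenly_spaced_positions:
  assumes "evenly_spaced m qs"
  shows "sorted_wrt (<) qs" and "\<forall>q\<in>set qs. q < m"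
  using evenly_spaced_sample_bounds(1)[OF assms]
  by (auto simp: sample_bounds_def sorted_wrt_append sorted_wrt_map)

lemma sorted_map_nth_if_evenly_spaced:
  assumes "sorted xs" "evenly_spaced (length xs) qs"
  shows "sorted (map (nth xs) qs)"
  unfolding sorted_map using evenly_spaced_positions(1)[OF assms(2)]
proof (rule sorted_wrt_mono_rel[rotated])
  show "xs ! q \<le> xs ! q'" if "q \<in> set qs" "q' \<in> set qs" "q < q'" for q q'
    using that assms(1) evenly_spaced_positions(2)[OF assms(2)] by (simp add: sorted_nth_mono)
qed

lemma sample_bound_less_if_upset:
  fixes xs :: "'a::linorder list"
  assumes srt: "sorted xs" and es: "evenly_spaced (length xs) qs"
    and up: "\<And>x y. A x \<Longrightarrow> x \<le> y \<Longrightarrow> A y" and "p < length xs" "A (xs ! p)"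
  shows "sample_bounds (length xs) qs ! length (filter (\<lambda>s. \<not> A s) (map (nth xs) qs)) < int p"
proof (cases "length (filter (\<lambda>s. \<not> A s) (map (nth xs) qs))")
  case (Suc l)
  define ys where "ys = map (nth xs) qs"
  have "l < length qs" using Suc by (metis Suc_le_lessD length_filter_le length_map)
  then have "l < length ys" by (simp add: ys_def)
  moreover have "\<not> A x" if "\<not> A y" "x \<le> y" for x y
    using that up by blast
  ultimately have "\<not> A (ys ! l) \<longleftrightarrow> l < length (filter (\<lambda>s. \<not> A s) ys)"
    using sorted_map_nth_if_evenly_spaced[OF srt es]
    unfolding ys_def by (intro nth_in_downset_iff_less_length_filter) auto
  then have "\<not> A (xs ! (qs ! l))" using Suc \<open>l < length qs\<close> by (simp add: ys_def)
  then have "qs ! l < p"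
    using up[OF assms(5)] sorted_nth_mono[OF srt, of p "qs ! l"] \<open>l < length qs\<close>
      evenly_spaced_positions(2)[OF es] by (metis not_less nth_mem)
  then show ?thesis using Suc \<open>l < length qs\<close> by (simp add: sample_bounds_nth)
qed (simp add: sample_bounds_nth)

lemma less_sample_bound_if_downset:
  fixes xs :: "'a::linorder list"
  assumes srt: "sorted xs" and es: "evenly_spaced (length xs) qs"
    and down: "\<And>x y. B y \<Longrightarrow> x \<le> y \<Longrightarrow> B x" and "p < length xs" "B (xs ! p)"
  shows "int p < sample_bounds (length xs) qs ! Suc (length (filter B (map (nth xs) qs)))"
proof -
  define ys where "ys = map (nth xs) qs"
  define b where "b = length (filter B ys)"
  have "b \<le> length qs" unfolding b_def ys_def by (metis length_filter_le length_map)
  show ?thesis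
  proof (cases "b = length qs")
    case True
    then show ?thesis using assms(4) by (simp add: b_def ys_def sample_bounds_nth)
  next
    case False
    then have "b < length qs" using \<open>b \<le> length qs\<close> by simp
    then have "b < length ys" by (simp add: ys_def)
    with sorted_map_nth_if_evenly_spaced[OF srt es] down
    have "B (ys ! b) \<longleftrightarrow> b < length (filter B ys)"
      unfolding ys_def by (rule nth_in_downset_iff_less_length_filter)
    then have "\<not> B (xs ! (qs ! b))" using \<open>b < length qs\<close> by (simp add: b_def ys_def)
    then have "p < qs ! b"
      using down[OF assms(5)] sorted_nth_mono[OF srt, of "qs ! b" p] assms(4) by (metis not_less)
    then show ?thesis using \<open>b < length qs\<close> by (simp add: b_def ys_def sample_bounds_nth)
  qed
qed

text \<open>If \<open>a\<close> samples fail the upward closed \<open>A\<close> and \<open>b\<close> samples satisfy the downward closed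
  \<open>B\<close>, the elements of \<open>A \<inter> B\<close> sit strictly between the boundary positions \<open>a\<close> and \<open>b + 1\<close>.\<close>

lemma length_filter_between_samples:
  fixes xs :: "'a::linorder list"
  assumes srt: "sorted xs" and es: "evenly_spaced (length xs) qs"
    and up: "\<And>x y. A x \<Longrightarrow> x \<le> y \<Longrightarrow> A y" and down: "\<And>x y. B y \<Longrightarrow> x \<le> y \<Longrightarrow> B x"
  defines "ys \<equiv> map (nth xs) qs"
  defines "a \<equiv> length (filter (\<lambda>s. \<not> A s) ys)" and "b \<equiv> length (filter B ys)"
  shows "length (filter (\<lambda>s. A s \<and> B s) xs)
    \<le> nat (sample_bounds (length xs) qs ! Suc b - (sample_bounds (length xs) qs ! a + 1))"
proof -
  define bs where "bs = sample_bounds (length xs) qs"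
  have "int ` {p. p < length xs \<and> A (xs ! p) \<and> B (xs ! p)} \<subseteq> {bs ! a<..<bs ! Suc b}"
    using sample_bound_less_if_upset[OF srt es up] less_sample_bound_if_downset[OF srt es down]
    by (auto simp: a_def b_def ys_def bs_def)
  then have "card (int ` {p. p < length xs \<and> A (xs ! p) \<and> B (xs ! p)}) \<le> card {bs ! a<..<bs ! Suc b}"
    by (intro card_mono) auto
  then show ?thesis
    by (simp add: length_filter_conv_card card_image bs_def)
qed

lemma length_filter_between_samples_le:
  fixes xs :: "'a::linorder list" and w :: nat
  assumes srt: "sorted xs" and es: "evenly_spaced (length xs) qs"
    and cap: "length xs \<le> w * (length qs + 1)"
    and up: "\<And>x y. A x \<Longrightarrow> x \<le> y \<Longrightarrow> A y" and down: "\<And>x y. B y \<Longrightarrow> x \<le> y \<Longrightarrow> B x"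
    and below_in_B: "\<And>s. \<not> A s \<Longrightarrow> B s"
  defines "ys \<equiv> map (nth xs) qs"
  shows "length (filter (\<lambda>s. A s \<and> B s) xs) + length (filter (\<lambda>s. \<not> A s) ys) * w
    \<le> (length (filter B ys) + 1) * w"
proof -
  define a where "a = length (filter (\<lambda>s. \<not> A s) ys)"
  define b where "b = length (filter B ys)"
  define bs where "bs = sample_bounds (length xs) qs"
  have "filter (\<lambda>s. \<not> A s) ys = filter (\<lambda>s. \<not> A s) (filter B ys)"
    using below_in_B by (auto simp: filter_filter intro: filter_cong)
  then have "a \<le> b" unfolding a_def b_def by (metis length_filter_le)
  moreover have "b \<le> length qs" unfolding b_def ys_def by (metis length_filter_le length_map)
  ultimately have window: "bs ! Suc b - bs ! a \<le> (int b + 1 - int a) * int w + 1"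
    unfolding bs_def by (rule sample_bounds_window_le[OF es cap])
  have "length (filter (\<lambda>s. A s \<and> B s) xs) \<le> nat (bs ! Suc b - (bs ! a + 1))"
    unfolding a_def b_def bs_def ys_def using srt es up down by (rule length_filter_between_samples)
  then have "int (length (filter (\<lambda>s. A s \<and> B s) xs)) \<le> max 0 (bs ! Suc b - (bs ! a + 1))"
    by linarith
  moreover have "int a * int w \<le> int b * int w" using \<open>a \<le> b\<close> by (intro mult_right_mono) auto
  ultimately have "int (length (filter (\<lambda>s. A s \<and> B s) xs) + a * w) \<le> int ((b + 1) * w)"
    using window by (simp add: algebra_simps)
  then show ?thesis unfolding a_def b_def by (simp only: of_nat_le_iff)
qed

section \<open>One sampling step\<close>

lemma distinct_if_mset_subseteq:
  assumes "mset xs \<subseteq># mset ys" "distinct ys"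
  shows "distinct xs"
proof -
  have "count (mset ys) x \<le> 1" for x
    using assms(2) by (simp add: distinct_count_atmost_1)
  then have "count (mset xs) x \<le> 1" for x
    using mset_subset_eq_count[OF assms(1), of x] order_trans by blast
  then show ?thesis
    by (metis count_eq_zero_iff distinct_count_atmost_1 le_antisym less_one not_le set_mset_mset)
qed

lemma mset_concat_map_mono:
  assumes "\<And>i. i \<in> set is \<Longrightarrow> mset (f i) \<subseteq># mset (h i)"
  shows "mset (concat (map f is)) \<subseteq># mset (concat (map h is))"
  using assms by (induction "is") (auto intro: subset_mset.add_mono)

lemma mset_map_nth_subseteq:
  assumes "distinct qs" "\<forall>q\<in>set qs. q < length xs"
  shows "mset (map (nth xs) qs) \<subseteq># mset xs"
proof -
  have "mset qs \<subseteq># mset [0..<length xs]"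
  proof -
    have "mset qs = mset_set (set qs)" using assms(1) by (simp add: mset_set_set)
    also have "\<dots> \<subseteq># mset_set {0..<length xs}"
      using assms(2) by (intro subset_imp_msubset_mset_set) auto
    finally show ?thesis by (simp flip: mset_set_set)
  qed
  then have "mset (map (nth xs) qs) \<subseteq># mset (map (nth xs) [0..<length xs])"
    unfolding mset_map by (rule image_mset_subseteq_mono)
  then show ?thesis by (simp only: map_nth)
qed

lemma nat_ceiling_div_minus_one_bounds:
  fixes l w :: nat
  assumes "0 < w"
  defines "c \<equiv> nat \<lceil>real l / real w\<rceil> - 1"
  shows "w * c \<le> l" and "l \<le> w * (c + 1)"
proof -
  define x where "x = real l / real w"
  have "real (w * c) \<le> real l \<and> real l \<le> real (w * (c + 1))"
  proof (cases "l = 0")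
    case False
    then have "0 < x" using assms by (simp add: x_def)
    then have "0 < nat \<lceil>x\<rceil>" "real (nat \<lceil>x\<rceil>) = \<lceil>x\<rceil>" by simp_all
    then have c: "real c = \<lceil>x\<rceil> - 1" "real (c + 1) = \<lceil>x\<rceil>"
      unfolding c_def x_def[symmetric] by (simp_all add: of_nat_diff Suc_le_eq)
    have "real l = real w * x" using assms by (simp add: x_def)
    moreover have "real w * (\<lceil>x\<rceil> - 1) \<le> real w * x" "real w * x \<le> real w * \<lceil>x\<rceil>"
      using ceiling_correct[of x] by (auto intro: mult_left_mono)
    ultimately have "real w * (\<lceil>x\<rceil> - 1) \<le> real l" "real l \<le> real w * \<lceil>x\<rceil>" by simp_all
    then show ?thesis unfolding of_nat_mult c by simp
  qed (simp add: c_def)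
  then show "w * c \<le> l" "l \<le> w * (c + 1)" by (simp_all only: of_nat_le_iff)
qed

lemma length_filter_le_nth:
  fixes V :: "'a::linorder list"
  assumes "sorted_wrt (<) V" "i < length V"
  shows "length (filter (\<lambda>s. s \<le> V ! i) V) = Suc i"
proof -
  have "{l. l < length V \<and> V ! l \<le> V ! i} = {..i}"
  proof (intro set_eqI iffI)
    fix l assume "l \<in> {l. l < length V \<and> V ! l \<le> V ! i}"
    then show "l \<in> {..i}"
      using sorted_wrt_nth_less[OF assms(1), of i l] by (auto simp: not_le[symmetric])
  next
    fix l assume "l \<in> {..i}"
    then show "l \<in> {l. l < length V \<and> V ! l \<le> V ! i}"
      using sorted_wrt_nth_less[OF assms(1), of l i] assms(2) by (cases "l = i") auto
  qed
  then show ?thesis by (simp add: length_filter_conv_card)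
qed

lemma set_gpes: "set (gpes r k t g) = {g * gsz r k t..<Suc g * gsz r k t}"
  by (simp add: gpes_def)

lemma sum_list_map_gpes:
  "(\<Sum>i\<leftarrow>gpes r k t g. f i) = (\<Sum>i = g * gsz r k t..<Suc g * gsz r k t. f i)"
  by (simp add: gpes_def interv_sum_list_conv_sum_set_nat)

lemma dvd_gsz: "t \<le> k \<Longrightarrow> r dvd gsz r k t"
  by (simp add: gsz_def Suc_diff_le)

locale sampled_group =
  fixes r k v :: nat and D :: "nat \<Rightarrow> nat \<Rightarrow> 'a::linorder list" and Q :: "nat \<Rightarrow> nat \<Rightarrow> nat list"
    and t g :: nat
  assumes r_pos: "0 < r" and t_le_k: "t \<le> k"
    and distinct_group: "distinct (concat (map (D t) (gpes r k t g)))"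
    and sorted_local: "\<And>i. i \<in> set (gpes r k t g) \<Longrightarrow> sorted (D t i)"
    and length_samples: "\<And>i. i \<in> set (gpes r k t g) \<Longrightarrow> length (Q t i) = num_samples r k v D t g i"
    and evenly_spaced_samples: "\<And>i. i \<in> set (gpes r k t g) \<Longrightarrow> evenly_spaced (length (D t i)) (Q t i)"
    and gtotal_dvd: "gsz r k t * (v + 1) dvd gtotal r k D t g"
begin

definition spacing :: nat where
  "spacing = gtotal r k D t g div (gsz r k t * (v + 1))"

lemma gtotal_eq: "gtotal r k D t g = gsz r k t * (v + 1) * spacing"
  using gtotal_dvd by (simp add: spacing_def)

lemma omega_eq: "omega r k v D t g = real spacing"
proof -
  have "0 < gsz r k t * (v + 1)" using r_pos by (simp add: gsz_def)
  then have "real (gsz r k t * (v + 1)) \<noteq> 0" by (simp del: of_nat_mult of_nat_add)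
  then show ?thesis
    unfolding omega_def gtotal_eq of_nat_mult[of "gsz r k t * (v + 1)" spacing] by simp
qed

lemma base_samples_bounds:
  assumes "0 < spacing"
  shows "spacing * base_samples r k v D t g i \<le> length (D t i)"
    and "length (D t i) \<le> spacing * (base_samples r k v D t g i + 1)"
  unfolding base_samples_def omega_eq using nat_ceiling_div_minus_one_bounds[OF assms] by simp_all

abbreviation samples :: "nat \<Rightarrow> 'a list" where
  "samples i \<equiv> map (nth (D t i)) (Q t i)"

lemma sample_seq_eq: "sample_seq r k D Q t g = sort (concat (map samples (gpes r k t g)))"
  by (simp add: sample_seq_def)

lemma length_filter_sample_seq:
  "length (filter P (sample_seq r k D Q t g)) = (\<Sum>i\<leftarrow>gpes r k t g. length (filter P (samples i)))"
proof -
  have "length (filter P (sort xs)) = length (filter P xs)" for xs :: "'a list"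
    by (metis mset_filter mset_sort size_mset)
  then show ?thesis by (simp add: sample_seq_eq filter_concat length_concat o_def)
qed

lemma length_sample_seq:
  assumes "0 < spacing"
  shows "length (sample_seq r k D Q t g) = gsz r k t * (v + 1)"
proof -
  define P where "P = gsz r k t"
  define base where "base i = base_samples r k v D t g i" for i
  define extra where "extra = P * (v + 1) - (\<Sum>i = g * P..<Suc g * P. base i)"
  have "spacing * (\<Sum>i = g * P..<Suc g * P. base i) \<le> gtotal r k D t g"
    unfolding gtotal_def sum_list_map_gpes sum_distrib_left P_def base_def
    using base_samples_bounds(1)[OF assms] by (intro sum_mono)
  then have sum_le: "(\<Sum>i = g * P..<Suc g * P. base i) \<le> P * (v + 1)"
    using assms by (simp add: gtotal_eq P_def mult.commute)
  have "gtotal r k D t g \<le> spacing * (\<Sum>i = g * P..<Suc g * P. base i + 1)"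
    unfolding gtotal_def sum_list_map_gpes sum_distrib_left P_def base_def
    using base_samples_bounds(2)[OF assms] by (intro sum_mono)
  also have "(\<Sum>i = g * P..<Suc g * P. base i + 1) = (\<Sum>i = g * P..<Suc g * P. base i) + P"
    by (simp only: sum.distrib) simp
  finally have "P * (v + 1) \<le> (\<Sum>i = g * P..<Suc g * P. base i) + P"
    using assms by (simp add: gtotal_eq P_def mult.commute)
  then have "extra \<le> P" by (simp add: extra_def)
  have "length (sample_seq r k D Q t g) = (\<Sum>i = g * P..<Suc g * P. length (Q t i))"
    using length_filter_sample_seq[of "\<lambda>_. True"] by (simp add: sum_list_map_gpes P_def)
  also have "\<dots> = (\<Sum>i = g * P..<Suc g * P. base i + (if i - g * P < extra then 1 else 0))"
    using length_samples
    by (intro sum.cong) (simp_all add: set_gpes num_samples_def base_def extra_def P_def sum_list_map_gpes)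
  also have "\<dots> = (\<Sum>i = g * P..<Suc g * P. base i) + (\<Sum>i = 0..<P. if i < extra then 1 else 0)"
    using sum.shift_bounds_nat_ivl[of "\<lambda>i. if i - g * P < extra then 1 else 0" 0 "g * P" P]
    by (simp add: sum.distrib add.commute)
  also have "(\<Sum>i = 0..<P. if i < extra then 1 else 0) = card ({0..<P} \<inter> {i. i < extra})"
    by (simp add: sum.If_cases)
  also have "{0..<P} \<inter> {i. i < extra} = {0..<extra}"
    using \<open>extra \<le> P\<close> by auto
  finally show ?thesis using sum_le by (simp add: extra_def P_def)
qed

lemma strict_sorted_sample_seq: "sorted_wrt (<) (sample_seq r k D Q t g)"
proof -
  have "mset (samples i) \<subseteq># mset (D t i)" if "i \<in> set (gpes r k t g)" for i
    using evenly_spaced_positions[OF evenly_spaced_samples[OF that]]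
    by (intro mset_map_nth_subseteq) (auto simp: strict_sorted_iff)
  then have "mset (concat (map samples (gpes r k t g))) \<subseteq># mset (concat (map (D t) (gpes r k t g)))"
    by (rule mset_concat_map_mono)
  then have "distinct (concat (map samples (gpes r k t g)))"
    using distinct_group by (rule distinct_if_mset_subseteq)
  then show ?thesis by (simp add: sample_seq_eq strict_sorted_iff)
qed

definition samples_per_bucket :: nat where
  "samples_per_bucket = gsz r k t * (v + 1) div r"

lemma gsz_mult_eq_samples_per_bucket: "gsz r k t * (v + 1) = r * samples_per_bucket"
proof -
  have "r dvd gsz r k t * (v + 1)" using dvd_gsz[OF t_le_k, of r] by simp
  then show ?thesis by (simp add: samples_per_bucket_def)
qed

lemma samples_per_bucket_pos: "0 < samples_per_bucket"
proof -
  have "0 < gsz r k t * (v + 1)" using r_pos by (simp add: gsz_def)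
  then show ?thesis unfolding gsz_mult_eq_samples_per_bucket by simp
qed

lemma length_sample_seq_eq_samples_per_bucket:
  "0 < spacing \<Longrightarrow> length (sample_seq r k D Q t g) = r * samples_per_bucket"
  using length_sample_seq gsz_mult_eq_samples_per_bucket by simp

lemma splitter_eq:
  assumes "0 < spacing"
  shows "splitter r k D Q t g j = sample_seq r k D Q t g ! (j * samples_per_bucket - 1)"
  using r_pos by (simp add: splitter_def length_sample_seq_eq_samples_per_bucket[OF assms])

lemma splitter_index_less:
  assumes "0 < spacing" "j < r"
  shows "j * samples_per_bucket - 1 < length (sample_seq r k D Q t g)"
proof -
  have "j * samples_per_bucket < r * samples_per_bucket"
    using assms(2) samples_per_bucket_pos by simp
  then show ?thesis
    using length_sample_seq_eq_samples_per_bucket[OF assms(1)] by linarith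
qed

lemma length_filter_le_splitter:
  assumes "0 < spacing" "0 < j" "j < r"
  shows "length (filter (\<lambda>s. s \<le> splitter r k D Q t g j) (sample_seq r k D Q t g))
    = j * samples_per_bucket"
  using length_filter_le_nth[OF strict_sorted_sample_seq splitter_index_less[OF assms(1,3)]]
    assms samples_per_bucket_pos by (simp add: splitter_eq)

lemma splitter_mono:
  assumes "0 < spacing" "j \<le> j'" "j' < r"
  shows "splitter r k D Q t g j \<le> splitter r k D Q t g j'"
  unfolding splitter_eq[OF assms(1)]
  using strict_sorted_sample_seq splitter_index_less[OF assms(1,3)] assms(2)
  by (intro sorted_nth_mono) (auto simp: strict_sorted_iff diff_le_mono)

lemma length_bucket:
  "length (bucket r k D Q t g j) = (\<Sum>i\<leftarrow>gpes r k t g. length (filter (in_bucket r k D Q t g j) (D t i)))"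
  by (simp add: bucket_def length_concat o_def)

lemma length_local_le_spacing:
  assumes "0 < spacing" "i \<in> set (gpes r k t g)"
  shows "length (D t i) \<le> spacing * (length (Q t i) + 1)"
proof -
  have "base_samples r k v D t g i \<le> length (Q t i)"
    using length_samples[OF assms(2)] by (simp add: num_samples_def)
  then show ?thesis
    using base_samples_bounds(2)[OF assms(1), of i] by (meson add_le_mono1 le_trans mult_le_mono2)
qed

lemma sum_length_filter_between_samples_le:
  assumes "0 < spacing"
    and up: "\<And>x y. A x \<Longrightarrow> x \<le> y \<Longrightarrow> A y" and down: "\<And>x y. B y \<Longrightarrow> x \<le> y \<Longrightarrow> B x"
    and below_in_B: "\<And>s. \<not> A s \<Longrightarrow> B s"
  shows "(\<Sum>i\<leftarrow>gpes r k t g. length (filter (\<lambda>s. A s \<and> B s) (D t i)))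
      + length (filter (\<lambda>s. \<not> A s) (sample_seq r k D Q t g)) * spacing
    \<le> (length (filter B (sample_seq r k D Q t g)) + gsz r k t) * spacing"
proof -
  have "length (filter (\<lambda>s. A s \<and> B s) (D t i)) + length (filter (\<lambda>s. \<not> A s) (samples i)) * spacing
      \<le> (length (filter B (samples i)) + 1) * spacing" if "i \<in> set (gpes r k t g)" for i
    using sorted_local[OF that] evenly_spaced_samples[OF that] length_local_le_spacing[OF assms(1) that]
      up down below_in_B by (rule length_filter_between_samples_le)
  then have "(\<Sum>i\<leftarrow>gpes r k t g. length (filter (\<lambda>s. A s \<and> B s) (D t i))
        + length (filter (\<lambda>s. \<not> A s) (samples i)) * spacing)
      \<le> (\<Sum>i\<leftarrow>gpes r k t g. (length (filter B (samples i)) + 1) * spacing)"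
    by (rule sum_list_mono)
  then show ?thesis
    unfolding length_filter_sample_seq
    by (simp add: sum_list_map_gpes sum.distrib sum_distrib_right add_mult_distrib)
qed

lemma length_bucket_le_spacing:
  assumes "j < r"
  shows "length (bucket r k D Q t g j) \<le> (samples_per_bucket + gsz r k t) * spacing"
proof (cases "spacing = 0")
  case True
  then have "D t i = []" if "i \<in> set (gpes r k t g)" for i
    using that gtotal_eq by (simp add: gtotal_def)
  then have "length (bucket r k D Q t g j) = 0" by (simp add: length_bucket)
  then show ?thesis by simp
next
  case False
  define V where "V = sample_seq r k D Q t g"
  define A where "A s \<longleftrightarrow> j = 0 \<or> splitter r k D Q t g j < s" for s
  define B where "B s \<longleftrightarrow> Suc j = r \<or> s \<le> splitter r k D Q t g (Suc j)" for s
  have in_bucket_eq: "in_bucket r k D Q t g j = (\<lambda>s. A s \<and> B s)"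
    by (simp add: fun_eq_iff in_bucket_def A_def B_def)
  have below_in_B: "B s" if "\<not> A s" for s
    using that splitter_mono[of j "Suc j"] False assms
    by (cases "Suc j = r") (auto simp: A_def B_def)
  have "length (bucket r k D Q t g j) + length (filter (\<lambda>s. \<not> A s) V) * spacing
      \<le> (length (filter B V) + gsz r k t) * spacing"
    unfolding length_bucket in_bucket_eq V_def using False below_in_B
    by (intro sum_length_filter_between_samples_le) (auto simp: A_def B_def)
  moreover have "length (filter (\<lambda>s. \<not> A s) V) = j * samples_per_bucket"
  proof (cases "j = 0")
    case False
    then show ?thesis
      using length_filter_le_splitter[of j] \<open>spacing \<noteq> 0\<close> assms by (simp add: V_def A_def not_less)
  qed (simp add: A_def)
  moreover have "length (filter B V) = Suc j * samples_per_bucket"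
  proof (cases "Suc j = r")
    case True
    then show ?thesis
      using length_sample_seq_eq_samples_per_bucket \<open>spacing \<noteq> 0\<close> by (simp add: V_def B_def)
  next
    case False
    then show ?thesis
      using length_filter_le_splitter[of "Suc j"] \<open>spacing \<noteq> 0\<close> assms by (simp add: V_def B_def[abs_def])
  qed
  ultimately show ?thesis by (simp add: algebra_simps)
qed

lemma length_bucket_le:
  assumes "j < r" "0 < v"
  shows "real (length (bucket r k D Q t g j)) \<le> (1 + real r / real v) / real r * real (gtotal r k D t g)"
proof -
  have "gtotal r k D t g = r * samples_per_bucket * spacing"
    by (simp only: gtotal_eq gsz_mult_eq_samples_per_bucket)
  then have "real (samples_per_bucket * spacing) = real (gtotal r k D t g) / real r"
    using r_pos by (simp add: field_simps)
  moreover have "real (gsz r k t * spacing) = real (gtotal r k D t g) / real (v + 1)"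
    by (simp add: gtotal_eq field_simps)
  moreover have "real (length (bucket r k D Q t g j))
      \<le> real (samples_per_bucket * spacing) + real (gsz r k t * spacing)"
    using length_bucket_le_spacing[OF assms(1)]
    by (simp only: add_mult_distrib flip: of_nat_add of_nat_le_iff)
  ultimately have "real (length (bucket r k D Q t g j))
      \<le> real (gtotal r k D t g) / real r + real (gtotal r k D t g) / real (v + 1)"
    by simp
  also have "\<dots> \<le> real (gtotal r k D t g) / real r + real (gtotal r k D t g) / real v"
    using assms(2) by (intro add_left_mono divide_left_mono) auto
  also have "\<dots> = (1 + real r / real v) / real r * real (gtotal r k D t g)"
    using assms r_pos by (simp add: field_simps)
  finally show ?thesis .
qed

lemma length_bucket_le_power:
  assumes "j < r" "0 < v"
    and "real (gtotal r k D t g) \<le> (1 + real r / real v) ^ s * n / real r ^ s"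
  shows "real (length (bucket r k D Q t g j)) \<le> (1 + real r / real v) ^ Suc s * n / real r ^ Suc s"
proof -
  have "real (length (bucket r k D Q t g j)) \<le> (1 + real r / real v) / real r * real (gtotal r k D t g)"
    using assms(1,2) by (rule length_bucket_le)
  also have "\<dots> \<le> (1 + real r / real v) / real r * ((1 + real r / real v) ^ s * n / real r ^ s)"
    using assms(3) by (intro mult_left_mono) auto
  finally show ?thesis by (simp add: field_simps)
qed

end

section \<open>The levels of the recursion\<close>

lemma gpes_Suc_eq_subgroup_pes:
  assumes "t < k"
  shows "gpes r k (Suc t) g = subgroup_pes r k t (g div r) (g mod r)"
proof -
  define x where "x = gsz r k (Suc t)"
  have "gsz r k t = r * x"
    using assms by (simp add: x_def gsz_def Suc_diff_le less_imp_le)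
  then have "g div r * gsz r k t + g mod r * x = g * x"
    by (metis add_mult_distrib div_mult_mod_eq mult.assoc mult.commute)
  then have "g div r * gsz r k t + Suc (g mod r) * x = Suc g * x" by simp
  with \<open>g div r * gsz r k t + g mod r * x = g * x\<close> show ?thesis
    by (simp only: gpes_def subgroup_pes_def x_def)
qed

lemma mset_bucket_subseteq:
  "mset (bucket r k D Q t g j) \<subseteq># mset (concat (map (D t) (gpes r k t g)))"
  unfolding bucket_def by (rule mset_concat_map_mono) simp

lemma ms_execution_next_level:
  assumes "ms_execution r k v inp D Q" "0 < t" "t < k" "g < r ^ t"
  shows "mset (concat (map (D (Suc t)) (gpes r k (Suc t) g))) = mset (bucket r k D Q t (g div r) (g mod r))"
    and "\<And>i. i \<in> set (gpes r k (Suc t) g) \<Longrightarrow> sorted (D (Suc t) i)"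
proof -
  have "0 < r" using assms(2,4) by (cases r) (auto simp: power_0_left)
  then have "g div r < r ^ (t - 1)" "g mod r < r"
    using assms(2,4) by (auto simp: less_mult_imp_div_less mult.commute power_eq_if split: if_splits)
  then show "mset (concat (map (D (Suc t)) (gpes r k (Suc t) g))) = mset (bucket r k D Q t (g div r) (g mod r))"
    and "\<And>i. i \<in> set (gpes r k (Suc t) g) \<Longrightarrow> sorted (D (Suc t) i)"
    using assms(1,2,3) unfolding ms_execution_def gpes_Suc_eq_subgroup_pes[OF assms(3)]
    by (auto simp: mset_concat o_def)
qed

lemma gtotal_eq_length_concat: "gtotal r k D t g = length (concat (map (D t) (gpes r k t g)))"
  by (simp add: gtotal_def length_concat o_def)

lemma gpes_first_level: "gpes r k (Suc 0) 0 = [0..<r ^ k]"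
  by (simp add: gpes_def gsz_def)

lemma div_less_power_if_less_Suc_power: "(g::nat) < r ^ Suc s \<Longrightarrow> g div r < r ^ s"
  by (simp add: less_mult_imp_div_less mult.commute)

lemma ms_execution_groups_distinct_sorted:
  assumes ex: "ms_execution r k v inp D Q" and dist: "distinct (concat (map inp [0..<r ^ k]))"
  shows "s < k \<Longrightarrow> g < r ^ s \<Longrightarrow> distinct (concat (map (D (Suc s)) (gpes r k (Suc s) g)))
    \<and> (\<forall>i\<in>set (gpes r k (Suc s) g). sorted (D (Suc s) i))"
proof (induction s arbitrary: g)
  case 0
  then have "g = 0" by simp
  have D1: "D (Suc 0) i = sort (inp i)" if "i \<in> set [0..<r ^ k]" for i
    using ex that unfolding ms_execution_def by simp
  then have "mset (concat (map (D (Suc 0)) [0..<r ^ k])) \<subseteq># mset (concat (map inp [0..<r ^ k]))"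
    by (intro mset_concat_map_mono) simp
  then show ?case
    using dist D1 distinct_if_mset_subseteq by (simp add: \<open>g = 0\<close> gpes_first_level)
next
  case (Suc s)
  have "distinct (concat (map (D (Suc s)) (gpes r k (Suc s) (g div r))))"
    using Suc div_less_power_if_less_Suc_power by simp
  then have "distinct (bucket r k D Q (Suc s) (g div r) (g mod r))"
    by (rule distinct_if_mset_subseteq[OF mset_bucket_subseteq])
  moreover have "mset (concat (map (D (Suc (Suc s))) (gpes r k (Suc (Suc s)) g)))
      = mset (bucket r k D Q (Suc s) (g div r) (g mod r))"
    using ms_execution_next_level(1)[OF ex _ Suc.prems] by simp
  ultimately show ?case
    using ms_execution_next_level(2)[OF ex _ Suc.prems] mset_eq_imp_distinct_iff by auto
qed

lemma ms_execution_sampled_group: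
  assumes ex: "ms_execution r k v inp D Q" and dist: "distinct (concat (map inp [0..<r ^ k]))"
    and dvd: "\<forall>t'\<in>{1..k}. \<forall>g' < r ^ (t' - 1). (gsz r k t' * (v + 1)) dvd gtotal r k D t' g'"
    and "0 < r" "t = Suc s" "s < k" "g < r ^ s"
  shows "sampled_group r k v D Q t g"
proof
  show "0 < r" "t \<le> k" using assms by simp_all
  show "distinct (concat (map (D t) (gpes r k t g)))" "\<And>i. i \<in> set (gpes r k t g) \<Longrightarrow> sorted (D t i)"
    using ms_execution_groups_distinct_sorted[OF ex dist] assms by simp_all
  show "\<And>i. i \<in> set (gpes r k t g) \<Longrightarrow> length (Q t i) = num_samples r k v D t g i"
    "\<And>i. i \<in> set (gpes r k t g) \<Longrightarrow> evenly_spaced (length (D t i)) (Q t i)"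
    using ex assms(5-7) unfolding ms_execution_def by simp_all
  show "gsz r k t * (v + 1) dvd gtotal r k D t g" using dvd assms(5-7) by simp
qed

lemma ms_execution_gtotal_le:
  assumes ex: "ms_execution r k v inp D Q" and dist: "distinct (concat (map inp [0..<r ^ k]))"
    and dvd: "\<forall>t'\<in>{1..k}. \<forall>g' < r ^ (t' - 1). (gsz r k t' * (v + 1)) dvd gtotal r k D t' g'"
    and "0 < r" "0 < v"
  shows "s < k \<Longrightarrow> g < r ^ s \<Longrightarrow> real (gtotal r k D (Suc s) g)
    \<le> (1 + real r / real v) ^ s * real (\<Sum>i<r ^ k. length (inp i)) / real r ^ s"
proof (induction s arbitrary: g)
  case 0
  have "D (Suc 0) i = sort (inp i)" if "i \<in> set [0..<r ^ k]" for i
    using ex that unfolding ms_execution_def by simp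
  then have "gtotal r k D (Suc 0) 0 = (\<Sum>i<r ^ k. length (inp i))"
    by (simp add: gtotal_def gpes_first_level interv_sum_list_conv_sum_set_nat atLeast0LessThan)
  then show ?case using 0 by simp
next
  case (Suc s)
  interpret sampled_group r k v D Q "Suc s" "g div r"
    by (rule ms_execution_sampled_group[OF ex dist dvd \<open>0 < r\<close> refl])
      (use Suc.prems div_less_power_if_less_Suc_power in auto)
  have "gtotal r k D (Suc (Suc s)) g = length (bucket r k D Q (Suc s) (g div r) (g mod r))"
    using ms_execution_next_level(1)[OF ex _ Suc.prems] unfolding gtotal_eq_length_concat
    by (metis size_mset zero_less_Suc)
  then show ?case
    using length_bucket_le_power Suc div_less_power_if_less_Suc_power \<open>0 < r\<close> \<open>0 < v\<close> by simp
qed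

theorem lemma2:
  fixes p r k v t g j :: nat
    and inp :: "nat \<Rightarrow> 'a::linorder list"
    and D :: "nat \<Rightarrow> nat \<Rightarrow> 'a list"
    and Q :: "nat \<Rightarrow> nat \<Rightarrow> nat list"
  assumes "k \<ge> 1" and "r \<ge> 1" and "p = r ^ k" and "v > 0"
    and "distinct (concat (map inp [0..<p]))"
    and "ms_execution r k v inp D Q"
    and "\<forall>t'\<in>{1..k}. \<forall>g' < r ^ (t' - 1). (gsz r k t' * (v + 1)) dvd gtotal r k D t' g'"
    and "1 \<le> t" and "t \<le> k" and "g < r ^ (t - 1)" and "j < r"
  shows "real (length (bucket r k D Q t g j))
           \<le> (1 + real r / real v) ^ t * real (\<Sum>i<p. length (inp i)) / real r ^ t"
proof -
  obtain s where t: "t = Suc s" using \<open>1 \<le> t\<close> by (cases t) auto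
  have "0 < r" using \<open>r \<ge> 1\<close> by simp
  have "s < k" "g < r ^ s" using \<open>t \<le> k\<close> \<open>g < r ^ (t - 1)\<close> t by simp_all
  interpret sampled_group r k v D Q t g
    using ms_execution_sampled_group[OF assms(6) _ assms(7) \<open>0 < r\<close> t \<open>s < k\<close> \<open>g < r ^ s\<close>] assms(3,5)
    by simp
  show ?thesis
    using length_bucket_le_power[OF \<open>j < r\<close> \<open>v > 0\<close>] t assms(3,5)
      ms_execution_gtotal_le[OF assms(6) _ assms(7) \<open>0 < r\<close> \<open>v > 0\<close> \<open>s < k\<close> \<open>g < r ^ s\<close>]
    by simp
qed

end
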